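(* Let $\mathfrak{A}$ be a complete atomic weakly associative relation algebra with universe $A$, and let $\mathfrak{B}=\langle B,T_\kappa,E_{\kappa\lambda}\rangle_{\kappa,\lambda<3}$ be its suitable structure. Then $\mathfrak{A}\cong\mathfrak{Ra}\,\mathfrak{Cm}\,\mathfrak{B}$, via the map $\varphi:A\to\mathcal{P}(B)$ defined by $\varphi(x)=\{t\in B: t_2\le x\}$.
   Context: WA: algebras $\langle A,+,\overline{\phantom{x}},;,\breve{\phantom{x}},1'\rangle$ with $x\cdot y=\overline{\overline{x}+\overline{y}}$, $0'=\overline{1'}$, $1=1'+0'$, $0=\overline{1}$, satisfying for all $x,y,z$: $x+y=y+x$; $x+(y+z)=(x+y)+z$; $\overline{\overline{x}+\overline{y}}+\overline{\overline{x}+y}=x$; $((x\cdot 1');1);1=(x\cdot1');1$; $(x+y);z=x;z+y;z$; $x;1'=x$; $\breve{\breve{x}}=x$; $\breve{(x+y)}=\breve{x}+\breve{y}$; $\breve{(x;y)}=\breve{y};\breve{x}$; $\breve{x};\overline{x;y}+\overline{y}=\overline{y}$. Complete/atomic refer to the Boolean reduct; $\mathrm{At}(\mathfrak{A})$ = atoms. Suitable structure: $B=\{s\in{}^3\mathrm{At}(\mathfrak{A}): s_2;s_0\ge s_1\}$; $T_\kappa=\{\langle s,t\rangle\in B\times B:s_\kappa=t_\kappa\}$; $E_{\kappa\kappa}=B$; for distinct $\kappa,\lambda$ with third index $\mu$, $E_{\kappa\lambda}=\{s\in B:s_\mu\le1'\}$. Complex algebra $\mathfrak{Cm}\,\mathfrak{B}=\langle\mathcal{P}(B),\cup,\cap,B\setminus\cdot,\emptyset,B,T_\kappa^*,E_{\kappa\lambda}\rangle_{\kappa,\lambda<3}$,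 with $T_\kappa^*(X)=\{y\in B:\exists x\in X\ \langle y,x\rangle\in T_\kappa\}$ as cylindrification $c_\kappa$ and $E_{\kappa\lambda}$ as diagonal $d_{\kappa\lambda}$. Relation-algebraic reduct: for an algebra $\mathfrak{C}=\langle C,+,\overline{\phantom{x}},c_\kappa,d_{\kappa\lambda}\rangle_{\kappa,\lambda<3}$, let $Nr_2\mathfrak{C}=\{x\in C:c_2x=x\}$, $x;y=c_2(c_1(d_{12}\cdot x)\cdot c_0(d_{02}\cdot y))$, $\breve{x}=c_2(d_{20}\cdot c_0(d_{01}\cdot c_1(d_{12}\cdot x)))$, and $\mathfrak{Ra}\,\mathfrak{C}=\langle Nr_2\mathfrak{C},+,\overline{\phantom{x}},;,\breve{\phantom{x}},d_{01}\rangle$. *)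

theory Defs
  imports Main
begin

text \<open>Signature of a (weakly associative) relation-type algebra, with universe the whole type 'a:
  join (+), Boolean complement, relative product (;), converse, identity element 1'.\<close>
record 'a ra_sig =
  join :: "'a \<Rightarrow> 'a \<Rightarrow> 'a"
  cpl  :: "'a \<Rightarrow> 'a"
  rcomp :: "'a \<Rightarrow> 'a \<Rightarrow> 'a"
  conv :: "'a \<Rightarrow> 'a"
  ident :: 'a

definition meet :: "'a ra_sig \<Rightarrow> 'a \<Rightarrow> 'a \<Rightarrow> 'a" where
  "meet A x y = cpl A (join A (cpl A x) (cpl A y))"

definition diversity :: "'a ra_sig \<Rightarrow> 'a" where
  "diversity A = cpl A (ident A)"

definition topel :: "'a ra_sig \<Rightarrow> 'a" where
  "topel A = join A (ident A) (diversity A)"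

definition botel :: "'a ra_sig \<Rightarrow> 'a" where
  "botel A = cpl A (topel A)"

definition leq :: "'a ra_sig \<Rightarrow> 'a \<Rightarrow> 'a \<Rightarrow> bool" where
  "leq A x y \<longleftrightarrow> join A x y = y"

definition WA :: "'a ra_sig \<Rightarrow> bool" where
  "WA A \<longleftrightarrow>
    (\<forall>x y. join A x y = join A y x) \<and>
    (\<forall>x y z. join A x (join A y z) = join A (join A x y) z) \<and>
    (\<forall>x y. join A (cpl A (join A (cpl A x) (cpl A y))) (cpl A (join A (cpl A x) y)) = x) \<and>
    (\<forall>x. rcomp A (rcomp A (meet A x (ident A)) (topel A)) (topel A)
          = rcomp A (meet A x (ident A)) (topel A)) \<and>
    (\<forall>x y z. rcomp A (join A x y) z = join A (rcomp A x z) (rcomp A y z)) \<and>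
    (\<forall>x. rcomp A x (ident A) = x) \<and>
    (\<forall>x. conv A (conv A x) = x) \<and>
    (\<forall>x y. conv A (join A x y) = join A (conv A x) (conv A y)) \<and>
    (\<forall>x y. conv A (rcomp A x y) = rcomp A (conv A y) (conv A x)) \<and>
    (\<forall>x y. join A (rcomp A (conv A x) (cpl A (rcomp A x y))) (cpl A y) = cpl A y)"

definition is_atom :: "'a ra_sig \<Rightarrow> 'a \<Rightarrow> bool" where
  "is_atom A a \<longleftrightarrow> a \<noteq> botel A \<and> (\<forall>y. leq A y a \<longrightarrow> y = botel A \<or> y = a)"

definition atoms :: "'a ra_sig \<Rightarrow> 'a set" where
  "atoms A = {a. is_atom A a}"

definition atomic :: "'a ra_sig \<Rightarrow> bool" where
  "atomic A \<longleftrightarrow> (\<forall>x. x \<noteq> botel A \<longrightarrow> (\<exists>a. is_atom A a \<and> leq A a x))"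

definition complete :: "'a ra_sig \<Rightarrow> bool" where
  "complete A \<longleftrightarrow> (\<forall>X. \<exists>s. (\<forall>x\<in>X. leq A x s) \<and> (\<forall>u. (\<forall>x\<in>X. leq A x u) \<longrightarrow> leq A s u))"

definition sel :: "'a \<times> 'a \<times> 'a \<Rightarrow> nat \<Rightarrow> 'a" where
  "sel s k = (if k = 0 then fst s else if k = 1 then fst (snd s) else snd (snd s))"

definition SB :: "'a ra_sig \<Rightarrow> ('a \<times> 'a \<times> 'a) set" where
  "SB A = {s. (\<forall>k<3. sel s k \<in> atoms A) \<and> leq A (sel s 1) (rcomp A (sel s 2) (sel s 0))}"

definition ST :: "'a ra_sig \<Rightarrow> nat \<Rightarrow> (('a \<times> 'a \<times> 'a) \<times> ('a \<times> 'a \<times> 'a)) set" where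
  "ST A k = {(s, t). s \<in> SB A \<and> t \<in> SB A \<and> sel s k = sel t k}"

definition SE :: "'a ra_sig \<Rightarrow> nat \<Rightarrow> nat \<Rightarrow> ('a \<times> 'a \<times> 'a) set" where
  "SE A k l = (if k = l then SB A else {s \<in> SB A. leq A (sel s (3 - k - l)) (ident A)})"

definition Cyl :: "'a ra_sig \<Rightarrow> nat \<Rightarrow> ('a \<times> 'a \<times> 'a) set \<Rightarrow> ('a \<times> 'a \<times> 'a) set" where
  "Cyl A k X = {y \<in> SB A. \<exists>x\<in>X. (y, x) \<in> ST A k}"

definition CmCpl :: "'a ra_sig \<Rightarrow> ('a \<times> 'a \<times> 'a) set \<Rightarrow> ('a \<times> 'a \<times> 'a) set" where
  "CmCpl A X = SB A - X"

definition Nr2 :: "'a ra_sig \<Rightarrow> ('a \<times> 'a \<times> 'a) set set" where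
  "Nr2 A = {X. X \<subseteq> SB A \<and> Cyl A 2 X = X}"

definition RaComp :: "'a ra_sig \<Rightarrow> ('a \<times> 'a \<times> 'a) set \<Rightarrow> ('a \<times> 'a \<times> 'a) set \<Rightarrow> ('a \<times> 'a \<times> 'a) set" where
  "RaComp A X Y = Cyl A 2 (Cyl A 1 (SE A 1 2 \<inter> X) \<inter> Cyl A 0 (SE A 0 2 \<inter> Y))"

definition RaConv :: "'a ra_sig \<Rightarrow> ('a \<times> 'a \<times> 'a) set \<Rightarrow> ('a \<times> 'a \<times> 'a) set" where
  "RaConv A X = Cyl A 2 (SE A 2 0 \<inter> Cyl A 0 (SE A 0 1 \<inter> Cyl A 1 (SE A 1 2 \<inter> X)))"

definition RaIdent :: "'a ra_sig \<Rightarrow> ('a \<times> 'a \<times> 'a) set" where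
  "RaIdent A = SE A 0 1"

definition phi :: "'a ra_sig \<Rightarrow> 'a \<Rightarrow> ('a \<times> 'a \<times> 'a) set" where
  "phi A x = {t \<in> SB A. leq A (sel t 2) x}"

end

theory Submission
  imports Defs
begin

text \<open>
  Read a triple \<open>s \<in> B\<close> as an atomic triangle with \<open>s\<^sub>1 \<le> s\<^sub>2 ; s\<^sub>0\<close>; then
  \<open>\<phi>(x)\<close> is the set of triangles whose side \<open>s\<^sub>2\<close> lies below \<open>x\<close>.
  By Huntington's theorem the reduct is a Boolean algebra; in an atomic one every element is
  determined by the atoms below it, and completeness lets every cylindrically closed set of
  triangles be recovered as \<open>\<phi>\<close> of the join of its \<open>s\<^sub>2\<close>-sides, so \<open>\<phi>\<close> is a bijection
  onto \<open>Nr\<^sub>2\<close>. For the relational operations, the Peircean law \<open>x\<breve> ; -(x ; y) \<le> -y\<close>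
  lets atomic triangles be rotated (\<open>c \<le> a ; b\<close> iff \<open>a \<le> c ; b\<breve>\<close>), an atom lies below
  \<open>x ; y\<close> iff it lies below \<open>a ; b\<close> for atoms \<open>a \<le> x\<close>, \<open>b \<le> y\<close>, and every atom \<open>a\<close>
  admits identity atoms \<open>i\<close> with \<open>a \<le> a ; i\<close> and \<open>i \<le> a\<breve> ; a\<close>. The latter give the
  degenerate triangles that witness the cylindrifications in \<open>RaComp\<close> and \<open>RaConv\<close>.
\<close>

locale huntington_algebra =
  fixes add :: "'a \<Rightarrow> 'a \<Rightarrow> 'a" (infixl "\<oplus>" 65)
    and neg :: "'a \<Rightarrow> 'a" ("\<sim>_" [80] 80)
  assumes add_commute: "x \<oplus> y = y \<oplus> x"
    and add_assoc: "x \<oplus> (y \<oplus> z) = (x \<oplus> y) \<oplus> z"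
    and huntington: "\<sim>(\<sim>x \<oplus> \<sim>y) \<oplus> \<sim>(\<sim>x \<oplus> y) = x"
begin

sublocale add: abel_semigroup "(\<oplus>)"
  by unfold_locales (simp only: add_assoc, rule add_commute)

lemma add_neg_add_neg_neg: "x \<oplus> \<sim>(\<sim>x \<oplus> y) = x \<oplus> \<sim>(\<sim>x \<oplus> \<sim>\<sim>y)"
proof -
  have "x \<oplus> \<sim>(\<sim>x \<oplus> y) = (\<sim>(\<sim>x \<oplus> \<sim>\<sim>y) \<oplus> \<sim>(\<sim>x \<oplus> \<sim>y)) \<oplus> \<sim>(\<sim>x \<oplus> y)"
    using huntington[of x "\<sim>y"] by simp
  also have "\<dots> = \<sim>(\<sim>x \<oplus> \<sim>\<sim>y) \<oplus> x"
    using huntington[of x y] by (simp add: add.assoc)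
  finally show ?thesis by (simp add: add.commute)
qed

lemma neg_add_neg_neg: "\<sim>x \<oplus> \<sim>\<sim>x = x \<oplus> \<sim>x"
  by (smt (verit) add_neg_add_neg_neg huntington add.commute add.left_commute)

lemma neg_neg [simp]: "\<sim>\<sim>x = x"
  by (metis huntington neg_add_neg_neg add.commute)

definition cap (infixl "\<otimes>" 70) where
  "x \<otimes> y = \<sim>(\<sim>x \<oplus> \<sim>y)"

sublocale cap: abel_semigroup "(\<otimes>)"
  by unfold_locales (simp_all add: cap_def add.assoc, simp add: add.commute)

lemma neg_add: "\<sim>(x \<oplus> y) = \<sim>x \<otimes> \<sim>y"
  by (simp add: cap_def)

lemma neg_cap: "\<sim>(x \<otimes> y) = \<sim>x \<oplus> \<sim>y"
  by (simp add: cap_def)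

lemma cap_split: "x \<otimes> y \<oplus> x \<otimes> \<sim>y = x"
  using huntington[of x "\<sim>y"] by (simp add: cap_def add.commute)

lemma add_neg_eq: "x \<oplus> \<sim>x = y \<oplus> \<sim>y"
proof -
  have "x \<oplus> \<sim>x = (x \<otimes> y \<oplus> x \<otimes> \<sim>y) \<oplus> (\<sim>x \<otimes> y \<oplus> \<sim>x \<otimes> \<sim>y)"
    by (simp only: cap_split)
  also have "\<dots> = (y \<otimes> x \<oplus> y \<otimes> \<sim>x) \<oplus> (\<sim>y \<otimes> x \<oplus> \<sim>y \<otimes> \<sim>x)"
    by (simp only: cap.commute add.assoc add.commute add.left_commute)
  also have "\<dots> = y \<oplus> \<sim>y"
    by (simp only: cap_split)
  finally show ?thesis .
qed

text \<open>By \<open>add_neg_eq\<close> the choice of \<open>undefined\<close> here is immaterial.\<close>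

definition one where "one = undefined \<oplus> \<sim>undefined"

definition zero where "zero = \<sim>one"

lemma add_neg: "x \<oplus> \<sim>x = one"
  unfolding one_def by (rule add_neg_eq)

lemma cap_neg: "x \<otimes> \<sim>x = zero"
  by (simp add: zero_def cap_def add_neg add.commute)

lemma add_zero: "x \<oplus> zero = x"
proof -
  have "x \<oplus> \<sim>(x \<oplus> \<sim>x) = x"
    by (smt (verit) add_neg_eq add.assoc neg_neg huntington add.commute)
  then show ?thesis by (simp add: zero_def add_neg)
qed

lemma add_idem: "x \<oplus> x = x"
proof -
  have "\<sim>(x \<oplus> x) \<oplus> zero = \<sim>x"
    using huntington[of "\<sim>x" x] by (simp add: zero_def add_neg add.commute)
  then show ?thesis by (metis add_zero neg_neg)
qed

lemma add_one: "x \<oplus> one = one"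
  by (metis add_neg add_assoc add_idem)

lemma add_cap_absorb: "x \<oplus> x \<otimes> y = x"
  by (metis cap_split add.assoc add.commute add_idem)

lemma cap_add_absorb: "x \<otimes> (x \<oplus> y) = x"
  by (metis add_cap_absorb neg_add neg_neg)

lemma cap_neg_add: "x \<otimes> (\<sim>x \<oplus> y) = x \<otimes> y"
proof -
  have "x \<otimes> (\<sim>x \<oplus> y) = x \<otimes> (\<sim>x \<oplus> y) \<otimes> y \<oplus> x \<otimes> (\<sim>x \<oplus> y) \<otimes> \<sim>y"
    by (rule cap_split[symmetric])
  also have "x \<otimes> (\<sim>x \<oplus> y) \<otimes> y = x \<otimes> y"
    by (metis cap.assoc cap.commute cap_add_absorb add.commute)
  also have "x \<otimes> (\<sim>x \<oplus> y) \<otimes> \<sim>y = (x \<otimes> \<sim>y) \<otimes> \<sim>(x \<otimes> \<sim>y)"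
    by (simp add: neg_cap cap.assoc cap.commute cap.left_commute)
  finally show ?thesis
    by (simp add: cap_neg add_zero)
qed

lemma cap_add_distrib: "x \<otimes> (y \<oplus> z) = x \<otimes> y \<oplus> x \<otimes> z"
proof -
  have "x \<otimes> (y \<oplus> z) = x \<otimes> (y \<oplus> z) \<otimes> y \<oplus> x \<otimes> (y \<oplus> z) \<otimes> \<sim>y"
    by (rule cap_split[symmetric])
  also have "x \<otimes> (y \<oplus> z) \<otimes> y = x \<otimes> y"
    by (metis cap.assoc cap.commute cap_add_absorb)
  also have "x \<otimes> (y \<oplus> z) \<otimes> \<sim>y = x \<otimes> \<sim>y \<otimes> z"
    by (metis cap.assoc cap.commute cap_neg_add neg_neg)
  also have "x \<otimes> y \<oplus> x \<otimes> \<sim>y \<otimes> z = x \<otimes> y \<oplus> (x \<otimes> z \<otimes> y \<oplus> x \<otimes> z \<otimes> \<sim>y)"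
    by (metis add_cap_absorb add.assoc cap.assoc cap.commute)
  also have "\<dots> = x \<otimes> y \<oplus> x \<otimes> z"
    by (simp only: cap_split)
  finally show ?thesis .
qed

lemma add_cap_distrib: "x \<oplus> y \<otimes> z = (x \<oplus> y) \<otimes> (x \<oplus> z)"
  by (metis cap_add_distrib neg_add neg_cap neg_neg)

definition le (infix "\<sqsubseteq>" 50) where
  "x \<sqsubseteq> y \<longleftrightarrow> x \<oplus> y = y"

definition less where
  "less x y \<longleftrightarrow> x \<sqsubseteq> y \<and> x \<noteq> y"

definition diff where
  "diff x y = x \<otimes> \<sim>y"

lemma le_iff_cap: "x \<sqsubseteq> y \<longleftrightarrow> x \<otimes> y = x"
  by (metis le_def add_cap_absorb cap_add_absorb add.commute cap.commute)

sublocale ba: boolean_algebra diff neg "(\<otimes>)" "(\<sqsubseteq>)" less "(\<oplus>)" zero one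
proof
  show "less x y \<longleftrightarrow> x \<sqsubseteq> y \<and> \<not> y \<sqsubseteq> x" for x y
    by (metis less_def le_def add.commute)
  show "x \<sqsubseteq> x" for x
    by (simp add: le_def add_idem)
  show "x \<sqsubseteq> z" if "x \<sqsubseteq> y" "y \<sqsubseteq> z" for x y z
    using that by (metis le_def add.assoc)
  show "x = y" if "x \<sqsubseteq> y" "y \<sqsubseteq> x" for x y
    using that by (metis le_def add.commute)
  show "x \<otimes> y \<sqsubseteq> x" "x \<otimes> y \<sqsubseteq> y" for x y
    by (metis le_def add_cap_absorb add.commute cap.commute)+
  show "x \<sqsubseteq> y \<otimes> z" if "x \<sqsubseteq> y" "x \<sqsubseteq> z" for x y z
    using that by (metis le_iff_cap cap.assoc)
  show "x \<sqsubseteq> x \<oplus> y" "y \<sqsubseteq> x \<oplus> y" for x y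
    by (metis le_def add.assoc add.commute add_idem)+
  show "y \<oplus> z \<sqsubseteq> x" if "y \<sqsubseteq> x" "z \<sqsubseteq> x" for x y z
    using that by (metis le_def add.assoc)
  show "zero \<sqsubseteq> x" "x \<sqsubseteq> one" for x
    by (simp_all add: le_def add_zero add_one add.commute)
  show "x \<oplus> y \<otimes> z = (x \<oplus> y) \<otimes> (x \<oplus> z)" for x y z
    by (rule add_cap_distrib)
  show "x \<otimes> \<sim>x = zero" "x \<oplus> \<sim>x = one" for x
    by (simp_all add: cap_neg add_neg)
  show "diff x y = x \<otimes> \<sim>y" for x y
    by (simp add: diff_def)
qed

definition atom where
  "atom a \<longleftrightarrow> a \<noteq> zero \<and> (\<forall>y. y \<sqsubseteq> a \<longrightarrow> y = zero \<or> y = a)"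

lemma atom_le_iff: "atom a \<Longrightarrow> a \<sqsubseteq> x \<longleftrightarrow> x \<otimes> a \<noteq> zero"
  unfolding atom_def
  by (metis ba.inf.absorb_iff2 ba.inf_le2 ba.inf_bot_left ba.inf_left_commute)

lemma atom_le_neg_iff: "atom a \<Longrightarrow> a \<sqsubseteq> \<sim>x \<longleftrightarrow> \<not> a \<sqsubseteq> x"
  by (metis atom_le_iff ba.inf_shunt ba.inf_commute ba.double_compl)

lemma atom_le_add_iff: "atom a \<Longrightarrow> a \<sqsubseteq> x \<oplus> y \<longleftrightarrow> a \<sqsubseteq> x \<or> a \<sqsubseteq> y"
  by (metis atom_le_neg_iff ba.compl_sup ba.le_inf_iff ba.le_supI1 ba.le_supI2)

lemma atom_le_atomD: "atom a \<Longrightarrow> atom b \<Longrightarrow> a \<sqsubseteq> b \<Longrightarrow> a = b"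
  unfolding atom_def by blast

lemma atom_le_lub_iff:
  assumes atoms: "\<forall>x\<in>S. atom x"
    and upper: "\<forall>x\<in>S. x \<sqsubseteq> u"
    and least: "\<forall>v. (\<forall>x\<in>S. x \<sqsubseteq> v) \<longrightarrow> u \<sqsubseteq> v"
    and "atom a"
  shows "a \<sqsubseteq> u \<longleftrightarrow> a \<in> S"
proof
  assume "a \<sqsubseteq> u"
  show "a \<in> S"
  proof (rule ccontr)
    assume "a \<notin> S"
    then have "\<forall>x\<in>S. x \<sqsubseteq> \<sim>a"
      using atoms \<open>atom a\<close> atom_le_atomD atom_le_neg_iff by metis
    then have "a \<sqsubseteq> \<sim>a"
      using least \<open>a \<sqsubseteq> u\<close> ba.order.trans by blast
    then show False
      using atom_le_neg_iff \<open>atom a\<close> by blast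
  qed
qed (use upper in blast)

end

text \<open>Stated with \<open>Suc 0\<close>, the simp normal form of \<open>1 :: nat\<close>.\<close>

lemma sel_triple [simp]: "sel (p, q, r) 0 = p" "sel (p, q, r) (Suc 0) = q" "sel (p, q, r) 2 = r"
  by (simp_all add: sel_def)

lemma Cyl_eqI:
  assumes "X \<subseteq> SB A"
    and "\<And>t. t \<in> X \<Longrightarrow> P (sel t k)"
    and "\<And>s. s \<in> SB A \<Longrightarrow> P (sel s k) \<Longrightarrow> \<exists>t\<in>X. sel t k = sel s k"
  shows "Cyl A k X = {s \<in> SB A. P (sel s k)}"
  using assms unfolding Cyl_def ST_def by fastforce

lemma Cyl_coordinate_set: "Cyl A k {s \<in> SB A. P (sel s k)} = {s \<in> SB A. P (sel s k)}"
  by (rule Cyl_eqI) auto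

locale nonassoc_relation_algebra = huntington_algebra +
  fixes rprod :: "'a \<Rightarrow> 'a \<Rightarrow> 'a" (infixl "\<odot>" 75)
    and cnv :: "'a \<Rightarrow> 'a" ("_\<^sup>\<smile>" [1000] 1000)
    and e :: 'a
  assumes rprod_add_distrib: "(x \<oplus> y) \<odot> z = x \<odot> z \<oplus> y \<odot> z"
    and rprod_e: "x \<odot> e = x"
    and cnv_cnv [simp]: "x\<^sup>\<smile>\<^sup>\<smile> = x"
    and cnv_add: "(x \<oplus> y)\<^sup>\<smile> = x\<^sup>\<smile> \<oplus> y\<^sup>\<smile>"
    and cnv_rprod: "(x \<odot> y)\<^sup>\<smile> = y\<^sup>\<smile> \<odot> x\<^sup>\<smile>"
    and cnv_rprod_neg: "x\<^sup>\<smile> \<odot> \<sim>(x \<odot> y) \<sqsubseteq> \<sim>y"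
begin

lemma cnv_mono: "x \<sqsubseteq> y \<Longrightarrow> x\<^sup>\<smile> \<sqsubseteq> y\<^sup>\<smile>"
  by (metis le_def cnv_add)

lemma cnv_le_iff: "x\<^sup>\<smile> \<sqsubseteq> y \<longleftrightarrow> x \<sqsubseteq> y\<^sup>\<smile>"
  by (metis cnv_mono cnv_cnv)

lemma cnv_eq_zero_iff [simp]: "x\<^sup>\<smile> = zero \<longleftrightarrow> x = zero"
  by (metis ba.bot_least ba.bot_unique cnv_le_iff cnv_cnv)

lemma cnv_cap: "(x \<otimes> y)\<^sup>\<smile> = x\<^sup>\<smile> \<otimes> y\<^sup>\<smile>"
proof (rule ba.order.antisym)
  show "(x \<otimes> y)\<^sup>\<smile> \<sqsubseteq> x\<^sup>\<smile> \<otimes> y\<^sup>\<smile>"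
    by (simp add: cnv_mono)
  have "(x\<^sup>\<smile> \<otimes> y\<^sup>\<smile>)\<^sup>\<smile> \<sqsubseteq> x \<otimes> y"
    by (simp add: cnv_le_iff)
  then show "x\<^sup>\<smile> \<otimes> y\<^sup>\<smile> \<sqsubseteq> (x \<otimes> y)\<^sup>\<smile>"
    by (metis cnv_le_iff)
qed

lemma cnv_atom: "atom a \<Longrightarrow> atom (a\<^sup>\<smile>)"
  unfolding atom_def by (metis cnv_le_iff cnv_eq_zero_iff cnv_cnv)

lemma rprod_add_distrib_left: "z \<odot> (x \<oplus> y) = z \<odot> x \<oplus> z \<odot> y"
  by (metis cnv_cnv cnv_add cnv_rprod rprod_add_distrib)

lemma rprod_mono: "x \<sqsubseteq> x' \<Longrightarrow> y \<sqsubseteq> y' \<Longrightarrow> x \<odot> y \<sqsubseteq> x' \<odot> y'"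
  by (metis le_def rprod_add_distrib rprod_add_distrib_left ba.order.trans)

lemma e_rprod: "e \<odot> x = x"
  by (metis cnv_cnv cnv_rprod rprod_e)

lemma cnv_e: "e\<^sup>\<smile> = e"
  by (metis cnv_cnv e_rprod rprod_e cnv_rprod)

lemma schroeder_left: "(x \<odot> y) \<otimes> z = zero \<longleftrightarrow> (x\<^sup>\<smile> \<odot> z) \<otimes> y = zero"
proof -
  have *: "(x\<^sup>\<smile> \<odot> z) \<otimes> y = zero" if "(x \<odot> y) \<otimes> z = zero" for x y z
  proof -
    have "z \<sqsubseteq> \<sim>(x \<odot> y)"
      using that by (simp add: ba.inf_shunt ba.inf_commute)
    then have "x\<^sup>\<smile> \<odot> z \<sqsubseteq> \<sim>y"
      using cnv_rprod_neg rprod_mono ba.order.trans ba.order.refl by blast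
    then show ?thesis
      by (simp add: ba.inf_shunt)
  qed
  show ?thesis
    using *[of x y z] *[of "x\<^sup>\<smile>" z y] by auto
qed

lemma schroeder_right: "(x \<odot> y) \<otimes> z = zero \<longleftrightarrow> (z \<odot> y\<^sup>\<smile>) \<otimes> x = zero"
proof -
  have "(x \<odot> y) \<otimes> z = zero \<longleftrightarrow> (y\<^sup>\<smile> \<odot> x\<^sup>\<smile>) \<otimes> z\<^sup>\<smile> = zero"
    by (metis cnv_eq_zero_iff cnv_cap cnv_rprod)
  also have "\<dots> \<longleftrightarrow> (y \<odot> z\<^sup>\<smile>) \<otimes> x\<^sup>\<smile> = zero"
    using schroeder_left[of "y\<^sup>\<smile>" "x\<^sup>\<smile>" "z\<^sup>\<smile>"] by simp
  also have "\<dots> \<longleftrightarrow> (z \<odot> y\<^sup>\<smile>) \<otimes> x = zero"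
    by (metis cnv_eq_zero_iff cnv_cap cnv_rprod cnv_cnv)
  finally show ?thesis .
qed

lemma atom_le_rprod_subident_right:
  "atom a \<Longrightarrow> atom b \<Longrightarrow> i \<sqsubseteq> e \<Longrightarrow> b \<sqsubseteq> a \<odot> i \<Longrightarrow> b = a"
  by (metis atom_le_atomD rprod_mono ba.order.refl ba.order.trans rprod_e)

lemma atom_le_rprod_subident_left:
  "atom a \<Longrightarrow> atom b \<Longrightarrow> i \<sqsubseteq> e \<Longrightarrow> b \<sqsubseteq> i \<odot> a \<Longrightarrow> b = a"
  by (metis atom_le_atomD rprod_mono ba.order.refl ba.order.trans e_rprod)

lemma subident_atom_le_rprodD:
  assumes "atom a" "atom b" "atom i" "i \<sqsubseteq> e" "i \<sqsubseteq> a \<odot> b"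
  shows "b = a\<^sup>\<smile>"
proof -
  have "(a\<^sup>\<smile> \<odot> i) \<otimes> b \<noteq> zero"
    using assms schroeder_left[of a b i] by (simp add: atom_le_iff)
  then have "b \<sqsubseteq> a\<^sup>\<smile> \<odot> i"
    using assms by (simp add: atom_le_iff)
  then show ?thesis
    using assms cnv_atom atom_le_rprod_subident_right by blast
qed

lemma atom_le_rprod_cycle:
  assumes "atom a" "atom b" "atom g"
  shows "g \<sqsubseteq> a \<odot> b \<longleftrightarrow> a \<sqsubseteq> g \<odot> b\<^sup>\<smile>"
  using assms schroeder_right[of a b g] by (simp add: atom_le_iff)

definition sig :: "'a ra_sig" where
  "sig = \<lparr>join = (\<oplus>), cpl = neg, rcomp = (\<odot>), conv = cnv, ident = e\<rparr>"

lemma sig_simps [simp]: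
  "join sig = (\<oplus>)" "cpl sig = neg" "rcomp sig = (\<odot>)" "conv sig = cnv" "ident sig = e"
  by (simp_all add: sig_def)

lemma leq_sig [simp]: "leq sig x y \<longleftrightarrow> x \<sqsubseteq> y"
  by (simp add: leq_def le_def)

lemma botel_sig [simp]: "botel sig = zero"
  by (simp add: botel_def topel_def diversity_def add_neg)

lemma is_atom_sig [simp]: "is_atom sig a \<longleftrightarrow> atom a"
  by (simp add: is_atom_def atom_def)

end

locale atomic_nonassoc_relation_algebra = nonassoc_relation_algebra +
  assumes atomic: "x \<noteq> zero \<Longrightarrow> \<exists>a. atom a \<and> a \<sqsubseteq> x"
begin

lemma le_iff_atoms_le: "x \<sqsubseteq> y \<longleftrightarrow> (\<forall>a. atom a \<longrightarrow> a \<sqsubseteq> x \<longrightarrow> a \<sqsubseteq> y)"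
proof (intro iffI allI impI)
  assume "\<forall>a. atom a \<longrightarrow> a \<sqsubseteq> x \<longrightarrow> a \<sqsubseteq> y"
  then have "x \<otimes> \<sim>y = zero"
    using atomic atom_le_neg_iff ba.le_inf_iff by blast
  then show "x \<sqsubseteq> y"
    by (simp add: ba.inf_shunt)
qed (use ba.order.trans in blast)

lemma ex_subident_atom_right:
  assumes "atom a"
  shows "\<exists>i. atom i \<and> i \<sqsubseteq> e \<and> a \<sqsubseteq> a \<odot> i"
proof (rule ccontr)
  assume none: "\<not> ?thesis"
  have "(a\<^sup>\<smile> \<odot> a) \<otimes> e = zero"
  proof (rule ccontr)
    assume "(a\<^sup>\<smile> \<odot> a) \<otimes> e \<noteq> zero"
    then obtain i where "atom i" "i \<sqsubseteq> a\<^sup>\<smile> \<odot> a" "i \<sqsubseteq> e"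
      using atomic ba.le_inf_iff by blast
    then have "a \<sqsubseteq> a \<odot> i"
      using assms schroeder_left[of a i a] by (simp add: atom_le_iff)
    with none \<open>atom i\<close> \<open>i \<sqsubseteq> e\<close> show False
      by blast
  qed
  then have "(a \<odot> e) \<otimes> a = zero"
    using schroeder_left[of a e a] by simp
  with assms show False
    by (simp add: rprod_e atom_def)
qed

lemma ex_subident_atom_left:
  assumes "atom a"
  shows "\<exists>i. atom i \<and> i \<sqsubseteq> e \<and> a \<sqsubseteq> i \<odot> a"
proof -
  obtain i where "atom i" "i \<sqsubseteq> e" "a\<^sup>\<smile> \<sqsubseteq> a\<^sup>\<smile> \<odot> i"
    using assms cnv_atom ex_subident_atom_right by blast
  then have "atom (i\<^sup>\<smile>)" "i\<^sup>\<smile> \<sqsubseteq> e" "a \<sqsubseteq> i\<^sup>\<smile> \<odot> a"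
    by (simp_all add: cnv_atom cnv_le_iff cnv_e cnv_rprod)
  then show ?thesis
    by blast
qed

lemma ex_subident_atom_le_cnv_rprod:
  assumes "atom a"
  shows "\<exists>i. atom i \<and> i \<sqsubseteq> e \<and> i \<sqsubseteq> a\<^sup>\<smile> \<odot> a"
proof -
  obtain i where "atom i" "i \<sqsubseteq> e" "a \<sqsubseteq> a \<odot> i"
    using assms ex_subident_atom_right by blast
  then have "i \<sqsubseteq> a\<^sup>\<smile> \<odot> a"
    using assms schroeder_left[of a i a] by (simp add: atom_le_iff)
  with \<open>atom i\<close> \<open>i \<sqsubseteq> e\<close> show ?thesis
    by blast
qed

lemma atom_le_rprod_right:
  assumes "atom g" "g \<sqsubseteq> x \<odot> y"
  shows "\<exists>b. atom b \<and> b \<sqsubseteq> y \<and> g \<sqsubseteq> x \<odot> b"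
proof -
  have "(x\<^sup>\<smile> \<odot> g) \<otimes> y \<noteq> zero"
    using assms schroeder_left[of x y g] by (simp add: atom_le_iff)
  then obtain b where "atom b" "b \<sqsubseteq> x\<^sup>\<smile> \<odot> g" "b \<sqsubseteq> y"
    using atomic ba.le_inf_iff by blast
  then have "g \<sqsubseteq> x \<odot> b"
    using assms schroeder_left[of x b g] by (simp add: atom_le_iff)
  with \<open>atom b\<close> \<open>b \<sqsubseteq> y\<close> show ?thesis
    by blast
qed

lemma atom_le_rprod_left:
  assumes "atom g" "g \<sqsubseteq> x \<odot> y"
  shows "\<exists>a. atom a \<and> a \<sqsubseteq> x \<and> g \<sqsubseteq> a \<odot> y"
proof -
  have "g\<^sup>\<smile> \<sqsubseteq> y\<^sup>\<smile> \<odot> x\<^sup>\<smile>"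
    using assms(2) by (simp add: cnv_mono flip: cnv_rprod)
  then obtain b where "atom b" "b \<sqsubseteq> x\<^sup>\<smile>" "g\<^sup>\<smile> \<sqsubseteq> y\<^sup>\<smile> \<odot> b"
    using assms cnv_atom atom_le_rprod_right by blast
  then have "atom (b\<^sup>\<smile>)" "b\<^sup>\<smile> \<sqsubseteq> x" "g \<sqsubseteq> b\<^sup>\<smile> \<odot> y"
    by (simp_all add: cnv_atom cnv_le_iff cnv_rprod)
  then show ?thesis
    by blast
qed

lemma atom_le_rprod_iff:
  assumes "atom g"
  shows "g \<sqsubseteq> x \<odot> y \<longleftrightarrow> (\<exists>a b. atom a \<and> atom b \<and> a \<sqsubseteq> x \<and> b \<sqsubseteq> y \<and> g \<sqsubseteq> a \<odot> b)"
proof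
  assume "g \<sqsubseteq> x \<odot> y"
  then obtain a where "atom a" "a \<sqsubseteq> x" "g \<sqsubseteq> a \<odot> y"
    using assms atom_le_rprod_left by blast
  moreover obtain b where "atom b" "b \<sqsubseteq> y" "g \<sqsubseteq> a \<odot> b"
    using assms atom_le_rprod_right calculation(3) by blast
  ultimately show "\<exists>a b. atom a \<and> atom b \<and> a \<sqsubseteq> x \<and> b \<sqsubseteq> y \<and> g \<sqsubseteq> a \<odot> b"
    by blast
qed (use rprod_mono ba.order.trans in blast)

lemma SB_iff:
  "s \<in> SB sig \<longleftrightarrow>
    atom (sel s 0) \<and> atom (sel s 1) \<and> atom (sel s 2) \<and> sel s 1 \<sqsubseteq> sel s 2 \<odot> sel s 0"
  by (auto simp: SB_def atoms_def sel_def less_Suc_eq numeral_3_eq_3)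

lemma phi_sig: "phi sig x = {s \<in> SB sig. sel s 2 \<sqsubseteq> x}"
  by (simp add: phi_def)

lemma Cyl_1_SE_12_phi: "Cyl sig 1 (SE sig 1 2 \<inter> phi sig x) = {s \<in> SB sig. sel s 1 \<sqsubseteq> x}"
proof (rule Cyl_eqI)
  show "SE sig 1 2 \<inter> phi sig x \<subseteq> SB sig"
    by (auto simp: phi_sig)
next
  fix t
  assume "t \<in> SE sig 1 2 \<inter> phi sig x"
  then have "t \<in> SB sig" "sel t 0 \<sqsubseteq> e" "sel t 2 \<sqsubseteq> x"
    by (auto simp: SE_def phi_sig)
  then show "sel t 1 \<sqsubseteq> x"
    using atom_le_rprod_subident_right[of "sel t 2" "sel t 1" "sel t 0"] by (simp add: SB_iff)
next
  fix s
  assume "s \<in> SB sig" "sel s 1 \<sqsubseteq> x"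
  moreover obtain i where "atom i" "i \<sqsubseteq> e" "sel s 1 \<sqsubseteq> sel s 1 \<odot> i"
    using \<open>s \<in> SB sig\<close> ex_subident_atom_right by (auto simp: SB_iff)
  ultimately have "(i, sel s 1, sel s 1) \<in> SE sig 1 2 \<inter> phi sig x"
    by (simp add: SE_def phi_sig SB_iff)
  then show "\<exists>t \<in> SE sig 1 2 \<inter> phi sig x. sel t 1 = sel s 1"
    by (rule bexI[rotated]) simp
qed

lemma Cyl_0_SE_02_phi: "Cyl sig 0 (SE sig 0 2 \<inter> phi sig y) = {s \<in> SB sig. (sel s 0)\<^sup>\<smile> \<sqsubseteq> y}"
proof (rule Cyl_eqI)
  show "SE sig 0 2 \<inter> phi sig y \<subseteq> SB sig"
    by (auto simp: phi_sig)
next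
  fix t
  assume "t \<in> SE sig 0 2 \<inter> phi sig y"
  then have "t \<in> SB sig" "sel t 1 \<sqsubseteq> e" "sel t 2 \<sqsubseteq> y"
    by (auto simp: SE_def phi_sig)
  then show "(sel t 0)\<^sup>\<smile> \<sqsubseteq> y"
    using subident_atom_le_rprodD[of "sel t 2" "sel t 0" "sel t 1"] by (simp add: SB_iff)
next
  fix s
  assume "s \<in> SB sig" "(sel s 0)\<^sup>\<smile> \<sqsubseteq> y"
  moreover obtain i where "atom i" "i \<sqsubseteq> e" "i \<sqsubseteq> (sel s 0)\<^sup>\<smile> \<odot> sel s 0"
    using \<open>s \<in> SB sig\<close> ex_subident_atom_le_cnv_rprod by (auto simp: SB_iff)
  ultimately have "(sel s 0, i, (sel s 0)\<^sup>\<smile>) \<in> SE sig 0 2 \<inter> phi sig y"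
    by (simp add: SE_def phi_sig SB_iff cnv_atom)
  then show "\<exists>t \<in> SE sig 0 2 \<inter> phi sig y. sel t 0 = sel s 0"
    by (rule bexI[rotated]) simp
qed

lemma Cyl_0_SE_01: "Cyl sig 0 (SE sig 0 1 \<inter> {s \<in> SB sig. sel s 1 \<sqsubseteq> x}) = {s \<in> SB sig. sel s 0 \<sqsubseteq> x}"
proof (rule Cyl_eqI)
  fix t
  assume "t \<in> SE sig 0 1 \<inter> {s \<in> SB sig. sel s 1 \<sqsubseteq> x}"
  then have "t \<in> SB sig" "sel t 2 \<sqsubseteq> e" "sel t 1 \<sqsubseteq> x"
    by (auto simp: SE_def)
  then show "sel t 0 \<sqsubseteq> x"
    using atom_le_rprod_subident_left[of "sel t 0" "sel t 1" "sel t 2"] by (simp add: SB_iff)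
next
  fix s
  assume "s \<in> SB sig" "sel s 0 \<sqsubseteq> x"
  moreover obtain i where "atom i" "i \<sqsubseteq> e" "sel s 0 \<sqsubseteq> i \<odot> sel s 0"
    using \<open>s \<in> SB sig\<close> ex_subident_atom_left by (auto simp: SB_iff)
  ultimately have "(sel s 0, sel s 0, i) \<in> SE sig 0 1 \<inter> {s \<in> SB sig. sel s 1 \<sqsubseteq> x}"
    by (simp add: SE_def SB_iff)
  then show "\<exists>t \<in> SE sig 0 1 \<inter> {s \<in> SB sig. sel s 1 \<sqsubseteq> x}. sel t 0 = sel s 0"
    by (rule bexI[rotated]) simp
qed auto

lemma phi_rprod: "phi sig (x \<odot> y) = RaComp sig (phi sig x) (phi sig y)"
proof -
  have "RaComp sig (phi sig x) (phi sig y) =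
      Cyl sig 2 ({s \<in> SB sig. sel s 1 \<sqsubseteq> x} \<inter> {s \<in> SB sig. (sel s 0)\<^sup>\<smile> \<sqsubseteq> y})"
    by (simp only: RaComp_def Cyl_1_SE_12_phi Cyl_0_SE_02_phi)
  also have "\<dots> = {s \<in> SB sig. sel s 2 \<sqsubseteq> x \<odot> y}"
  proof (rule Cyl_eqI)
    fix t
    assume t: "t \<in> {s \<in> SB sig. sel s 1 \<sqsubseteq> x} \<inter> {s \<in> SB sig. (sel s 0)\<^sup>\<smile> \<sqsubseteq> y}"
    then have "sel t 2 \<sqsubseteq> sel t 1 \<odot> (sel t 0)\<^sup>\<smile>"
      using atom_le_rprod_cycle[of "sel t 2" "sel t 0" "sel t 1"] by (simp add: SB_iff)
    also have "\<dots> \<sqsubseteq> x \<odot> y"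
      using t rprod_mono by blast
    finally show "sel t 2 \<sqsubseteq> x \<odot> y" .
  next
    fix s
    assume "s \<in> SB sig" "sel s 2 \<sqsubseteq> x \<odot> y"
    moreover have "atom (sel s 2)"
      using \<open>s \<in> SB sig\<close> by (simp add: SB_iff)
    ultimately obtain a b where "atom a" "atom b" "a \<sqsubseteq> x" "b \<sqsubseteq> y" "sel s 2 \<sqsubseteq> a \<odot> b"
      using atom_le_rprod_iff by blast
    then have "(b\<^sup>\<smile>, a, sel s 2) \<in> {s \<in> SB sig. sel s 1 \<sqsubseteq> x} \<inter> {s \<in> SB sig. (sel s 0)\<^sup>\<smile> \<sqsubseteq> y}"
      using \<open>s \<in> SB sig\<close> atom_le_rprod_cycle[of a b "sel s 2"] by (simp add: SB_iff cnv_atom)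
    then show "\<exists>t \<in> {s \<in> SB sig. sel s 1 \<sqsubseteq> x} \<inter> {s \<in> SB sig. (sel s 0)\<^sup>\<smile> \<sqsubseteq> y}. sel t 2 = sel s 2"
      by (rule bexI[rotated]) simp
  qed auto
  finally show ?thesis
    by (simp add: phi_sig)
qed

lemma phi_cnv: "phi sig (x\<^sup>\<smile>) = RaConv sig (phi sig x)"
proof -
  have "RaConv sig (phi sig x) = Cyl sig 2 (SE sig 2 0 \<inter> {s \<in> SB sig. sel s 0 \<sqsubseteq> x})"
    by (simp only: RaConv_def Cyl_1_SE_12_phi Cyl_0_SE_01)
  also have "\<dots> = {s \<in> SB sig. sel s 2 \<sqsubseteq> x\<^sup>\<smile>}"
  proof (rule Cyl_eqI)
    fix t
    assume "t \<in> SE sig 2 0 \<inter> {s \<in> SB sig. sel s 0 \<sqsubseteq> x}"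
    then have "t \<in> SB sig" "sel t 1 \<sqsubseteq> e" "sel t 0 \<sqsubseteq> x"
      by (auto simp: SE_def)
    then show "sel t 2 \<sqsubseteq> x\<^sup>\<smile>"
      using subident_atom_le_rprodD[of "sel t 2" "sel t 0" "sel t 1"] by (simp add: SB_iff cnv_le_iff)
  next
    fix s
    assume "s \<in> SB sig" "sel s 2 \<sqsubseteq> x\<^sup>\<smile>"
    moreover obtain i where "atom i" "i \<sqsubseteq> e" "i \<sqsubseteq> sel s 2 \<odot> (sel s 2)\<^sup>\<smile>"
      using \<open>s \<in> SB sig\<close> ex_subident_atom_le_cnv_rprod[of "(sel s 2)\<^sup>\<smile>"] by (auto simp: SB_iff cnv_atom)
    ultimately have "((sel s 2)\<^sup>\<smile>, i, sel s 2) \<in> SE sig 2 0 \<inter> {s \<in> SB sig. sel s 0 \<sqsubseteq> x}"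
      by (simp add: SE_def SB_iff cnv_atom cnv_le_iff)
    then show "\<exists>t \<in> SE sig 2 0 \<inter> {s \<in> SB sig. sel s 0 \<sqsubseteq> x}. sel t 2 = sel s 2"
      by (rule bexI[rotated]) simp
  qed auto
  finally show ?thesis
    by (simp add: phi_sig)
qed

lemma phi_add: "phi sig (x \<oplus> y) = phi sig x \<union> phi sig y"
  by (auto simp: phi_sig SB_iff atom_le_add_iff)

lemma phi_neg: "phi sig (\<sim>x) = CmCpl sig (phi sig x)"
  by (auto simp: phi_sig CmCpl_def SB_iff atom_le_neg_iff)

lemma phi_e: "phi sig e = RaIdent sig"
  by (simp add: phi_sig RaIdent_def SE_def)

lemma ex_SB_sel_2:
  assumes "atom a"
  shows "\<exists>s \<in> SB sig. sel s 2 = a"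
proof -
  obtain i where "atom i" "i \<sqsubseteq> e" "a \<sqsubseteq> a \<odot> i"
    using assms ex_subident_atom_right by blast
  then have "(i, a, a) \<in> SB sig"
    using assms by (simp add: SB_iff)
  then show ?thesis
    by (rule bexI[rotated]) simp
qed

lemma phi_subset_phi_iff: "phi sig x \<subseteq> phi sig y \<longleftrightarrow> x \<sqsubseteq> y"
proof
  assume "phi sig x \<subseteq> phi sig y"
  then have "a \<sqsubseteq> y" if "atom a" "a \<sqsubseteq> x" for a
    using that ex_SB_sel_2[of a] by (auto simp: phi_sig)
  then show "x \<sqsubseteq> y"
    using le_iff_atoms_le by blast
qed (auto simp: phi_sig intro: ba.order.trans)

lemma inj_phi: "inj (phi sig)"
  by (rule injI) (simp add: set_eq_subset phi_subset_phi_iff ba.order.eq_iff)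

lemma phi_Nr2: "phi sig x \<in> Nr2 sig"
  using Cyl_coordinate_set[of sig 2 "\<lambda>a. a \<sqsubseteq> x"] by (simp add: Nr2_def phi_sig)

lemma Nr2_subset_range_phi:
  assumes "complete sig" and "X \<in> Nr2 sig"
  shows "X \<in> range (phi sig)"
proof -
  have X: "X \<subseteq> SB sig" "Cyl sig 2 X = X"
    using assms(2) by (simp_all add: Nr2_def)
  define S where "S = (\<lambda>t. sel t 2) ` X"
  obtain u where upper: "\<forall>a\<in>S. a \<sqsubseteq> u" and least: "\<forall>v. (\<forall>a\<in>S. a \<sqsubseteq> v) \<longrightarrow> u \<sqsubseteq> v"
    using assms(1) unfolding complete_def leq_sig by blast
  have "\<forall>a\<in>S. atom a"
    using X(1) by (auto simp: S_def SB_iff)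
  then have "phi sig u = {s \<in> SB sig. sel s 2 \<in> S}"
    using atom_le_lub_iff[OF _ upper least] by (auto simp: phi_sig SB_iff)
  also have "\<dots> = Cyl sig 2 X"
    using X(1) by (auto simp: S_def Cyl_def ST_def)
  finally show ?thesis
    using X(2) by (metis rangeI)
qed

lemma bij_betw_phi: "complete sig \<Longrightarrow> bij_betw (phi sig) UNIV (Nr2 sig)"
  unfolding bij_betw_def using inj_phi phi_Nr2 Nr2_subset_range_phi by blast

end

lemma (in nonassoc_relation_algebra) atomic_sig_imp_atomic_nonassoc_relation_algebra:
  assumes "atomic sig"
  shows "atomic_nonassoc_relation_algebra (\<oplus>) neg (\<odot>) cnv e"
proof -
  have "\<exists>a. atom a \<and> a \<sqsubseteq> x" if "x \<noteq> zero" for x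
    using assms that by (simp add: atomic_def)
  then show ?thesis
    by (intro atomic_nonassoc_relation_algebra.intro atomic_nonassoc_relation_algebra_axioms.intro
        nonassoc_relation_algebra_axioms)
qed

lemma WA_imp_nonassoc_relation_algebra:
  assumes "WA A"
  shows "nonassoc_relation_algebra (join A) (cpl A) (rcomp A) (conv A) (ident A)"
proof -
  interpret huntington_algebra "join A" "cpl A"
    using assms unfolding WA_def huntington_algebra_def by blast
  show ?thesis
    using assms huntington_algebra_axioms
    unfolding WA_def nonassoc_relation_algebra_def nonassoc_relation_algebra_axioms_def le_def
    by blast
qed

theorem theorem5:
  fixes A :: "'a ra_sig"
  assumes "WA A" and "complete A" and "atomic A"
  shows "bij_betw (phi A) UNIV (Nr2 A) \<and>
    (\<forall>x y. phi A (join A x y) = phi A x \<union> phi A y) \<and>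
    (\<forall>x. phi A (cpl A x) = CmCpl A (phi A x)) \<and>
    (\<forall>x y. phi A (rcomp A x y) = RaComp A (phi A x) (phi A y)) \<and>
    (\<forall>x. phi A (conv A x) = RaConv A (phi A x)) \<and>
    phi A (ident A) = RaIdent A"
proof -
  interpret nonassoc_relation_algebra "join A" "cpl A" "rcomp A" "conv A" "ident A"
    using \<open>WA A\<close> by (rule WA_imp_nonassoc_relation_algebra)
  have sig_eq: "sig = A"
    by (simp add: sig_def)
  interpret atomic_nonassoc_relation_algebra "join A" "cpl A" "rcomp A" "conv A" "ident A"
    using \<open>atomic A\<close> atomic_sig_imp_atomic_nonassoc_relation_algebra by (simp add: sig_eq)
  show ?thesis
    using bij_betw_phi phi_add phi_neg phi_rprod phi_cnv phi_e \<open>complete A\<close>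
    unfolding sig_eq by blast
qed

end
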